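(* Let $0<\lambda<n$ and $1\le p<\infty$. There exist functions $f\in V_0L^{p,\lambda}\cap V_\infty L^{p,\lambda}$ which do not satisfy $\lim_{N\to\infty}\sup_{x\in\mathbb{R}^n}\int_{B(x,1)}|f(y)|^p\chi_{\mathbb{R}^n\setminus B(0,N)}(y)\,dy=0$.
   Context: $B(x,r)$ is the open ball in $\mathbb{R}^n$ with center $x$ and radius $r$. For $f\in L^1_{\mathrm{loc}}(\mathbb{R}^n)$ let $\mathfrak{M}_{p,\lambda}(f;x,r):=r^{-\lambda}\int_{B(x,r)}|f(y)|^p\,dy$. The homogeneous Morrey space $L^{p,\lambda}(\mathbb{R}^n)$ consists of $f\in L^p_{\mathrm{loc}}(\mathbb{R}^n)$ with $\|f\|_{p,\lambda}:=\sup_{x\in\mathbb{R}^n,\,r>0}\mathfrak{M}_{p,\lambda}(f;x,r)^{1/p}<\infty$. $V_0L^{p,\lambda}=\{f\in L^{p,\lambda}:\lim_{r\to0}\sup_{x}\mathfrak{M}_{p,\lambda}(f;x,r)=0\}$ and $V_\infty L^{p,\lambda}=\{f\in L^{p,\lambda}:\lim_{r\to\infty}\sup_{x}\mathfrak{M}_{p,\lambda}(f;x,r)=0\}$. *)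

theory Defs
  imports "HOL-Analysis.Analysis"
begin

definition morrey_M :: "real \<Rightarrow> real \<Rightarrow> ('a::euclidean_space \<Rightarrow> real) \<Rightarrow> 'a \<Rightarrow> real \<Rightarrow> ennreal" where
  "morrey_M p lam f x r =
     ennreal (r powr (- lam)) * (\<integral>\<^sup>+ y \<in> ball x r. ennreal (\<bar>f y\<bar> powr p) \<partial>lebesgue)"

definition morrey_space :: "real \<Rightarrow> real \<Rightarrow> ('a::euclidean_space \<Rightarrow> real) set" where
  "morrey_space p lam =
     {f. f \<in> borel_measurable lebesgue \<and>
         (\<forall>x r. 0 < r \<longrightarrow> (\<integral>\<^sup>+ y \<in> ball x r. ennreal (\<bar>f y\<bar> powr p) \<partial>lebesgue) < \<infinity>) \<and>
         (SUP xr \<in> UNIV \<times> {0<..}. morrey_M p lam f (fst xr) (snd xr)) < \<infinity>}"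

definition V0_morrey :: "real \<Rightarrow> real \<Rightarrow> ('a::euclidean_space \<Rightarrow> real) set" where
  "V0_morrey p lam = {f \<in> morrey_space p lam.
     ((\<lambda>r. SUP x. morrey_M p lam f x r) \<longlongrightarrow> 0) (at_right 0)}"

definition Vinf_morrey :: "real \<Rightarrow> real \<Rightarrow> ('a::euclidean_space \<Rightarrow> real) set" where
  "Vinf_morrey p lam = {f \<in> morrey_space p lam.
     ((\<lambda>r. SUP x. morrey_M p lam f x r) \<longlongrightarrow> 0) at_top}"

end

theory Submission
  imports Defs "HOL-Real_Asymp.Real_Asymp"
begin

text \<open>The witness is the indicator of the union of the balls of radius 1/2 centred at the points
  2^k e (k = 0, 1, ...) on a coordinate ray. A ball of radius r meets only about log r of them, so
  its mass is at most min (r^n, log r) up to constants; after multiplying by r^(-lambda) this tends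
  to 0 both as r -> 0 and as r -> infinity. Yet far out every unit ball around a centre 2^k e
  still carries the full mass of a ball of radius 1/2, so the tails do not vanish uniformly.\<close>

lemma bounded_above_if_tendsto_zero_at_ends:
  fixes g :: "real \<Rightarrow> real"
  assumes "continuous_on {0<..} g" "(g \<longlongrightarrow> 0) (at_right 0)" "(g \<longlongrightarrow> 0) at_top"
  obtains G where "\<And>r. 0 < r \<Longrightarrow> g r \<le> G"
proof -
  have "\<forall>\<^sub>F r in at_right 0. g r < 1"
    using order_tendstoD(2)[OF assms(2)] by simp
  then obtain a where "0 < a" and a: "\<And>r. 0 < r \<Longrightarrow> r < a \<Longrightarrow> g r < 1"
    unfolding eventually_at_right_field by blast
  have "\<forall>\<^sub>F r in at_top. g r < 1"
    using order_tendstoD(2)[OF assms(3)] by simp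
  then obtain b where b: "\<And>r. b \<le> r \<Longrightarrow> g r < 1"
    unfolding eventually_at_top_linorder by blast
  have "continuous_on {a..max a b} g"
    using \<open>0 < a\<close> by (intro continuous_on_subset[OF assms(1)]) auto
  moreover have "{a..max a b} \<noteq> {}"
    by simp
  ultimately obtain c where c: "\<And>r. r \<in> {a..max a b} \<Longrightarrow> g r \<le> g c"
    using continuous_attains_sup[OF compact_Icc] by blast
  have "g r \<le> max 1 (g c)" if "0 < r" for r
  proof (cases "r < a \<or> b \<le> r")
    case True
    then show ?thesis using a[OF that] b by fastforce
  next
    case False
    then show ?thesis using c[of r] by simp
  qed
  then show thesis by (rule that)
qed

lemma V0_Vinf_morrey_if_morrey_M_le:
  fixes f :: "'a::euclidean_space \<Rightarrow> real" and g :: "real \<Rightarrow> real"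
  assumes f: "f \<in> borel_measurable lebesgue"
    and M: "\<And>x r. 0 < r \<Longrightarrow> morrey_M p lam f x r \<le> ennreal (g r)"
    and g: "continuous_on {0<..} g" "(g \<longlongrightarrow> 0) (at_right 0)" "(g \<longlongrightarrow> 0) at_top"
  shows "f \<in> V0_morrey p lam \<inter> Vinf_morrey p lam"
proof -
  obtain G where G: "\<And>r. 0 < r \<Longrightarrow> g r \<le> G"
    using bounded_above_if_tendsto_zero_at_ends[OF g] by blast
  have local_finite: "(\<integral>\<^sup>+ y \<in> ball x r. ennreal (\<bar>f y\<bar> powr p) \<partial>lebesgue) < \<infinity>" if "0 < r" for x r
  proof -
    have "ennreal (r powr -lam) * (\<integral>\<^sup>+ y \<in> ball x r. ennreal (\<bar>f y\<bar> powr p) \<partial>lebesgue) < \<infinity>"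
      using le_less_trans[OF M[OF that] ennreal_less_top] by (simp add: morrey_M_def)
    with that show ?thesis
      by (auto simp: ennreal_mult_less_top)
  qed
  have "(SUP xr \<in> UNIV \<times> {0<..}. morrey_M p lam f (fst xr) (snd xr)) \<le> ennreal G"
  proof (rule SUP_least)
    fix xr :: "'a \<times> real" assume "xr \<in> UNIV \<times> {0<..}"
    then have "0 < snd xr" by auto
    then show "morrey_M p lam f (fst xr) (snd xr) \<le> ennreal G"
      using M G by (meson ennreal_leI order_trans)
  qed
  then have "(SUP xr \<in> UNIV \<times> {0<..}. morrey_M p lam f (fst xr) (snd xr)) < \<infinity>"
    using ennreal_less_top[of G] unfolding infinity_ennreal_def by (rule le_less_trans)
  with f local_finite have "f \<in> morrey_space p lam"
    unfolding morrey_space_def by blast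
  moreover have sup_le: "(SUP x. morrey_M p lam f x r) \<le> ennreal (g r)" if "0 < r" for r
    using M[OF that] by (rule SUP_least)
  have vanish: "((\<lambda>r. SUP x. morrey_M p lam f x r) \<longlongrightarrow> 0) F"
    if "(g \<longlongrightarrow> 0) F" "\<forall>\<^sub>F r in F. 0 < r" for F
  proof (rule tendsto_sandwich[OF _ _ tendsto_const])
    show "((\<lambda>r. ennreal (g r)) \<longlongrightarrow> 0) F"
      using tendsto_ennrealI[OF that(1)] by simp
    show "\<forall>\<^sub>F r in F. (SUP x. morrey_M p lam f x r) \<le> ennreal (g r)"
      using that(2) by eventually_elim (rule sup_le)
  qed simp
  note vanish[OF g(2) eventually_at_right_less] vanish[OF g(3) eventually_gt_at_top]
  ultimately show ?thesis
    unfolding V0_morrey_def Vinf_morrey_def by blast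
qed

lemma set_nn_integral_abs_indicator_powr:
  assumes "0 < p" "S \<in> sets M" "T \<in> sets M" "A \<in> sets M"
  shows "(\<integral>\<^sup>+ y \<in> A. ennreal (\<bar>indicator S y :: real\<bar> powr p) * indicator T y \<partial>M)
    = emeasure M (S \<inter> T \<inter> A)"
proof -
  have "(\<integral>\<^sup>+ y \<in> A. ennreal (\<bar>indicator S y :: real\<bar> powr p) * indicator T y \<partial>M)
      = (\<integral>\<^sup>+ y. indicator (S \<inter> T \<inter> A) y \<partial>M)"
    using \<open>0 < p\<close> by (intro nn_integral_cong) (simp add: indicator_def)
  also have "\<dots> = emeasure M (S \<inter> T \<inter> A)"
    using assms by (intro nn_integral_indicator) auto
  finally show ?thesis .
qed

lemma morrey_M_indicator:
  fixes S :: "'a::euclidean_space set"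
  assumes "0 < p" "S \<in> sets lebesgue"
  shows "morrey_M p lam (indicator S) x r = ennreal (r powr -lam) * emeasure lebesgue (S \<inter> ball x r)"
proof -
  have "(\<integral>\<^sup>+ y \<in> ball x r. ennreal (\<bar>indicator S y :: real\<bar> powr p) \<partial>lebesgue)
      = (\<integral>\<^sup>+ y \<in> ball x r. ennreal (\<bar>indicator S y :: real\<bar> powr p) * indicator UNIV y \<partial>lebesgue)"
    by simp
  also have "\<dots> = emeasure lebesgue (S \<inter> ball x r)"
    using set_nn_integral_abs_indicator_powr[OF assms, of UNIV "ball x r"] by simp
  finally show ?thesis
    unfolding morrey_M_def by (rule arg_cong)
qed

lemma card_le_log_if_powers_of_two_close:
  fixes K :: "nat set" and d :: real
  assumes close: "\<And>j k. j \<in> K \<Longrightarrow> k \<in> K \<Longrightarrow> \<bar>2^j - 2^k\<bar> < d" and "1/2 \<le> d"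
  shows "finite K" "real (card K) \<le> log 2 (2*d) + 2"
proof -
  define k0 where "k0 = (LEAST k. k \<in> K)"
  define T where "T = {..< nat \<lceil>log 2 (2*d)\<rceil>}"
  have "K \<subseteq> insert k0 T"
  proof
    fix k assume "k \<in> K"
    then have "k0 \<in> K" "k0 \<le> k"
      unfolding k0_def by (rule LeastI, rule Least_le)
    show "k \<in> insert k0 T"
    proof (cases "k = k0")
      case False
      with \<open>k0 \<le> k\<close> obtain m where m: "k = Suc m" "k0 \<le> m"
        by (cases k) auto
      have "(2::real)^k0 \<le> 2^m" using m by (intro power_increasing) auto
      then have "(2::real)^k / 2 \<le> 2^k - 2^k0" using m by simp
      also have "\<dots> < d" using close[OF \<open>k \<in> K\<close> \<open>k0 \<in> K\<close>] by simp
      finally have "log 2 (2^k) < log 2 (2*d)" by (intro log_less) auto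
      then have "k < nat \<lceil>log 2 (2*d)\<rceil>" by (simp add: log_nat_power) linarith
      then show ?thesis by (simp add: T_def)
    qed simp
  qed
  then show "finite K"
    by (rule finite_subset) (simp add: T_def)
  have "card K \<le> card (insert k0 T)"
    using \<open>K \<subseteq> insert k0 T\<close> by (intro card_mono) (simp_all add: T_def)
  also have "\<dots> \<le> card T + 1"
    using finite_lessThan[of "nat \<lceil>log 2 (2*d)\<rceil>"] by (simp add: card_insert_if flip: T_def)
  finally have "real (card K) \<le> real (nat \<lceil>log 2 (2*d)\<rceil>) + 1"
    by (simp add: T_def)
  moreover have "0 \<le> log 2 (2*d)" using \<open>1/2 \<le> d\<close> by simp
  ultimately show "real (card K) \<le> log 2 (2*d) + 2"
    by linarith
qed

definition dyadic_centre :: "nat \<Rightarrow> 'a::euclidean_space" where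
  "dyadic_centre k = (2^k) *\<^sub>R (SOME e. e \<in> Basis)"

definition dyadic_balls :: "'a::euclidean_space set" where
  "dyadic_balls = (\<Union>k. ball (dyadic_centre k) (1/2))"

lemma norm_some_Basis: "norm (SOME e. e \<in> (Basis :: 'a::euclidean_space set)) = 1"
  by (rule norm_Basis, rule someI_ex) (use nonempty_Basis in blast)

lemma norm_dyadic_centre: "norm (dyadic_centre k :: 'a::euclidean_space) = 2^k"
  using norm_some_Basis[where 'a='a] by (simp add: dyadic_centre_def)

lemma dist_dyadic_centre:
  "dist (dyadic_centre j) (dyadic_centre k :: 'a::euclidean_space) = \<bar>2^j - 2^k\<bar>"
  using norm_some_Basis[where 'a='a]
  by (simp add: dyadic_centre_def dist_norm flip: scaleR_diff_left)

lemma open_dyadic_balls: "open dyadic_balls"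
  by (auto simp: dyadic_balls_def)

lemma sets_lebesgue_dyadic_balls: "dyadic_balls \<in> sets lebesgue"
  by (intro sets_completionI_sets) (simp add: borel_open open_dyadic_balls)

lemma emeasure_dyadic_balls_inter_ball_le_log:
  fixes x :: "'a::euclidean_space"
  assumes "0 < r"
  shows "emeasure lebesgue (dyadic_balls \<inter> ball x r)
    \<le> ennreal ((log 2 (4*r+2) + 2) * (unit_ball_vol DIM('a) * (1/2)^DIM('a)))"
proof -
  define K where "K = {k. dist x (dyadic_centre k :: 'a) < r + 1/2}"
  define w where "w = unit_ball_vol DIM('a) * (1/2::real)^DIM('a)"
  have close: "\<bar>2^j - 2^k\<bar> < 2*r + 1" if "j \<in> K" "k \<in> K" for j k
  proof -
    have "dist (dyadic_centre j) (dyadic_centre k :: 'a) \<le> dist x (dyadic_centre j) + dist x (dyadic_centre k)"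
      by (rule dist_triangle3)
    with that show ?thesis
      by (simp add: K_def dist_dyadic_centre)
  qed
  have "finite K" "real (card K) \<le> log 2 (2*(2*r+1)) + 2"
    using card_le_log_if_powers_of_two_close[of K "2*r+1", OF close] assms by simp_all
  then have K: "finite K" "real (card K) \<le> log 2 (4*r+2) + 2"
    by (simp_all add: distrib_left)
  have "dyadic_balls \<inter> ball x r \<subseteq> (\<Union>k\<in>K. ball (dyadic_centre k) (1/2))"
  proof
    fix y assume "y \<in> dyadic_balls \<inter> ball x r"
    then obtain k where k: "dist (dyadic_centre k) y < 1/2" and "dist x y < r"
      by (auto simp: dyadic_balls_def)
    then have "k \<in> K"
      using dist_triangle_less_add[of x y r "dyadic_centre k" "1/2"] by (simp add: K_def)
    with k show "y \<in> (\<Union>k\<in>K. ball (dyadic_centre k) (1/2))"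
      by auto
  qed
  then have "emeasure lebesgue (dyadic_balls \<inter> ball x r)
      \<le> emeasure lebesgue (\<Union>k\<in>K. ball (dyadic_centre k :: 'a) (1/2))"
    by (intro emeasure_mono sets_completionI_sets) (auto simp: borel_open)
  also have "\<dots> \<le> (\<Sum>k\<in>K. emeasure lebesgue (ball (dyadic_centre k :: 'a) (1/2)))"
    using K by (intro emeasure_subadditive_finite) auto
  also have "\<dots> = (\<Sum>k\<in>K. ennreal w)"
    by (simp add: emeasure_ball w_def)
  also have "\<dots> = ennreal (real (card K) * w)"
    by (simp add: ennreal_of_nat_eq_real_of_nat ennreal_mult')
  also have "\<dots> \<le> ennreal ((log 2 (4*r+2) + 2) * w)"
    using K by (intro ennreal_leI mult_right_mono) (auto simp: w_def)
  finally show ?thesis unfolding w_def .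
qed

lemma morrey_M_dyadic_balls_le:
  fixes x :: "'a::euclidean_space"
  assumes "0 < p" "0 < r"
  shows "morrey_M p lam (indicator dyadic_balls) x r \<le> ennreal (r powr -lam *
    min (unit_ball_vol DIM('a) * r^DIM('a))
        ((log 2 (4*r+2) + 2) * (unit_ball_vol DIM('a) * (1/2)^DIM('a))))"
proof -
  define m where "m = min (unit_ball_vol DIM('a) * r^DIM('a))
    ((log 2 (4*r+2) + 2) * (unit_ball_vol DIM('a) * (1/2)^DIM('a)))"
  have "emeasure lebesgue (dyadic_balls \<inter> ball x r) \<le> emeasure lebesgue (ball x r)"
    by (intro emeasure_mono) auto
  then have "emeasure lebesgue (dyadic_balls \<inter> ball x r) \<le> min
      (ennreal (unit_ball_vol DIM('a) * r^DIM('a)))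
      (ennreal ((log 2 (4*r+2) + 2) * (unit_ball_vol DIM('a) * (1/2)^DIM('a))))"
    using emeasure_dyadic_balls_inter_ball_le_log[OF \<open>0 < r\<close>, of x] \<open>0 < r\<close>
    by (simp add: emeasure_ball)
  also have "\<dots> = ennreal m"
    unfolding m_def using \<open>0 < r\<close> by (intro min_ennreal) simp_all
  finally have mass: "emeasure lebesgue (dyadic_balls \<inter> ball x r) \<le> ennreal m" .
  have "morrey_M p lam (indicator dyadic_balls) x r
      = ennreal (r powr -lam) * emeasure lebesgue (dyadic_balls \<inter> ball x r)"
    using \<open>0 < p\<close> sets_lebesgue_dyadic_balls by (rule morrey_M_indicator)
  also have "\<dots> \<le> ennreal (r powr -lam) * ennreal m"
    using mass by (rule mult_left_mono) simp
  also have "\<dots> = ennreal (r powr -lam * m)"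
    by (simp add: ennreal_mult')
  finally show ?thesis
    unfolding m_def .
qed

lemma tail_mass_dyadic_balls_ge:
  assumes "0 < p"
  shows "emeasure lebesgue (ball (0::'a::euclidean_space) (1/2)) \<le> (SUP x. \<integral>\<^sup>+ y \<in> ball x 1.
    ennreal (\<bar>indicator (dyadic_balls :: 'a set) y :: real\<bar> powr p) * indicator (- ball 0 (real N)) y \<partial>lebesgue)"
proof -
  define c :: 'a where "c = dyadic_centre (Suc N)"
  have "real (Suc N) \<le> real (2 ^ Suc N)"
    using less_exp[of "Suc N"] by linarith
  then have "real N + 1 \<le> norm c"
    by (simp add: c_def norm_dyadic_centre)
  have "ball c (1/2) \<subseteq> dyadic_balls \<inter> - ball 0 (real N) \<inter> ball c 1"
  proof
    fix y assume "y \<in> ball c (1/2)"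
    then have "dist c y < 1/2" by simp
    moreover have "norm c \<le> norm y + dist c y"
      using norm_triangle_sub[of c y] by (simp add: dist_norm)
    ultimately have "real N < norm y"
      using \<open>real N + 1 \<le> norm c\<close> by linarith
    moreover have "y \<in> dyadic_balls"
      using \<open>dist c y < 1/2\<close> unfolding dyadic_balls_def c_def by (intro UN_I[OF UNIV_I]) simp
    ultimately show "y \<in> dyadic_balls \<inter> - ball 0 (real N) \<inter> ball c 1"
      using \<open>dist c y < 1/2\<close> by simp
  qed
  have compl_ball: "- ball 0 (real N) \<in> sets lebesgue"
    by (intro sets_completionI_sets) (simp add: borel_closed)
  with \<open>ball c (1/2) \<subseteq> _\<close>
  have "emeasure lebesgue (ball c (1/2)) \<le> emeasure lebesgue (dyadic_balls \<inter> - ball 0 (real N) \<inter> ball c 1)"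
    by (intro emeasure_mono sets.Int) (simp_all add: sets_lebesgue_dyadic_balls)
  also have "\<dots> = (\<integral>\<^sup>+ y \<in> ball c 1.
      ennreal (\<bar>indicator dyadic_balls y :: real\<bar> powr p) * indicator (- ball 0 (real N)) y \<partial>lebesgue)"
    by (intro set_nn_integral_abs_indicator_powr[symmetric]) (simp_all add: assms compl_ball sets_lebesgue_dyadic_balls)
  also have "\<dots> \<le> (SUP x. \<integral>\<^sup>+ y \<in> ball x 1.
      ennreal (\<bar>indicator (dyadic_balls :: 'a set) y :: real\<bar> powr p) * indicator (- ball 0 (real N)) y \<partial>lebesgue)"
    by (rule SUP_upper) simp
  finally show ?thesis
    by (simp add: emeasure_ball)
qed

lemma indicator_dyadic_balls_in_V0_Vinf_morrey:
  assumes "0 < lam" "lam < real DIM('a::euclidean_space)" "0 < p"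
  shows "indicator (dyadic_balls :: 'a set) \<in> V0_morrey p lam \<inter> Vinf_morrey p lam"
proof (rule V0_Vinf_morrey_if_morrey_M_le)
  define V where "V = unit_ball_vol DIM('a)"
  have "0 < V" by (simp add: V_def)
  let ?g = "\<lambda>r. r powr -lam * min (V * r^DIM('a)) ((log 2 (4*r+2) + 2) * (V * (1/2)^DIM('a)))"
  show "continuous_on {0<..} ?g"
    by (intro continuous_intros) auto
  show "(?g \<longlongrightarrow> 0) (at_right 0)" "(?g \<longlongrightarrow> 0) at_top"
    using assms \<open>0 < V\<close> by real_asymp+
  show "morrey_M p lam (indicator dyadic_balls) x r \<le> ennreal (?g r)" if "0 < r" for x :: 'a and r
    using morrey_M_dyadic_balls_le[of p r lam x] assms that by (simp add: V_def)
qed (intro borel_measurable_indicator sets_lebesgue_dyadic_balls)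

lemma tails_of_dyadic_balls_not_vanishing:
  assumes "0 < p"
  shows "\<not> ((\<lambda>N::nat. SUP x. \<integral>\<^sup>+ y \<in> ball x 1.
      ennreal (\<bar>indicator (dyadic_balls :: 'a::euclidean_space set) y :: real\<bar> powr p) *
        indicator (- ball 0 (real N)) y \<partial>lebesgue) \<longlonglongrightarrow> 0)"
proof
  assume lim: "(\<lambda>N::nat. SUP x. \<integral>\<^sup>+ y \<in> ball x 1.
      ennreal (\<bar>indicator (dyadic_balls :: 'a set) y :: real\<bar> powr p) *
        indicator (- ball 0 (real N)) y \<partial>lebesgue) \<longlonglongrightarrow> 0"
  have "emeasure lebesgue (ball (0::'a) (1/2)) \<le> 0"
    using assms by (intro LIMSEQ_le_const[OF lim] exI allI impI tail_mass_dyadic_balls_ge)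
  then show False
    using unit_ball_vol_pos[of "real DIM('a)"] by (simp add: emeasure_ball not_le)
qed

theorem theorem4p1:
  fixes p lam :: real
  assumes "0 < lam" "lam < real DIM('a::euclidean_space)" "1 \<le> p"
  shows "\<exists>f :: 'a \<Rightarrow> real. f \<in> V0_morrey p lam \<inter> Vinf_morrey p lam \<and>
     \<not> ((\<lambda>N::nat. SUP x. \<integral>\<^sup>+ y \<in> ball x 1.
            ennreal (\<bar>f y\<bar> powr p) * indicator (- ball 0 (real N)) y \<partial>lebesgue)
          \<longlonglongrightarrow> 0)"
proof -
  have "0 < p" using assms(3) by simp
  then show ?thesis
    using indicator_dyadic_balls_in_V0_Vinf_morrey[OF assms(1,2)] tails_of_dyadic_balls_not_vanishing
    by (intro exI[of _ "indicator dyadic_balls"] conjI)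
qed

end
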